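(* Fix $n\ge1$ and $j$ with $|j|\le k-1$ and $I_j\neq\emptyset$. Let $E_{n,j}(\kappa)$ be the bottom of the spectrum of the operator $H_{j,\kappa}=\pi_{I_j}(\Delta+v_\kappa)\iota_{I_j}$ on $\ell^2(I_j)$. Then $$\liminf_{\kappa\to0^+}\frac{E_{n,j}(\kappa)}{\kappa^2}\ge2n+1 .$$
   Context: $(\Delta f)(x)=2f(x)-f(x+1)-f(x-1)$ on $\ell^2(\mathbb{Z})$ and $v_\kappa(x)=\kappa^4x^2$. For $I\subseteq\mathbb{Z}$, $\pi_I:\ell^2(\mathbb{Z})\to\ell^2(I)$ is restriction and $\iota_I:\ell^2(I)\to\ell^2(\mathbb{Z})$ is extension by zero (Dirichlet restriction). Fix $n\ge1$. Let $h_n$ be the physicists' Hermite polynomial $h_n(y)=(-1)^ne^{y^2}\frac{d^n}{dy^n}e^{-y^2}$. Let $0\le z_1<z_2<\dots<z_k$ be the nonnegative zeros of $h_n$, where $k=n/2$ if $n$ is even (then $z_1>0$) and $k=(n+1)/2$ if $n$ is odd (then $z_1=0$). For $\kappa>0$ define: $a_1=\lfloor z_1/\kappa\rfloor+1$; $\beta_1=1$ if $z_1=0$ and $\beta_1=z_1/(\kappa(a_1-1))$ otherwise; for $2\le j\le k$, $a_j=\lfloor z_j/(\beta_{j-1}\kappa)\rfloor+1$ and $\beta_j=z_j/(\kappa(a_j-1))$; for $1\le j\le k-1$, $b_j=\lfloor z_{j+1}/(\beta_j\kappa)\rfloor-1$, and $b_k=\infty$. Set $I_j=[a_j,b_j]\cap\mathbb{Z}$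 for $1\le j\le k$ (so $I_k=[a_k,\infty)\cap\mathbb{Z}$), $I_{-j}=[-b_j,-a_j]\cap\mathbb{Z}$ and $\beta_{-j}=\beta_j$. If $n$ is even, put $b_0=a_1-2$, $I_0=[-b_0,b_0]\cap\mathbb{Z}$ and $\beta_0=1$; if $n$ is odd, $I_0=\emptyset$. *)

theory Defs
  imports "HOL-Analysis.Analysis"
begin

definition hermite :: "nat \<Rightarrow> real \<Rightarrow> real" where
  "hermite n y = (-1)^n * exp (y^2) * (deriv ^^ n) (\<lambda>t. exp (-(t^2))) y"

text \<open>Nonnegative zeros of h_n, in increasing order: z n i is z_i (1-based).\<close>
definition hzero :: "nat \<Rightarrow> nat \<Rightarrow> real" where
  "hzero n i = sorted_list_of_set {y::real. 0 \<le> y \<and> hermite n y = 0} ! (i - 1)"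

definition hk :: "nat \<Rightarrow> nat" where
  "hk n = (if even n then n div 2 else (n + 1) div 2)"

fun abeta :: "nat \<Rightarrow> real \<Rightarrow> nat \<Rightarrow> int \<times> real" where
  "abeta n \<kappa> 0 = undefined"
| "abeta n \<kappa> (Suc 0) =
     (let a = \<lfloor>hzero n 1 / \<kappa>\<rfloor> + 1
      in (a, if hzero n 1 = 0 then 1 else hzero n 1 / (\<kappa> * real_of_int (a - 1))))"
| "abeta n \<kappa> (Suc (Suc j)) =
     (let \<beta>' = snd (abeta n \<kappa> (Suc j));
          a = \<lfloor>hzero n (Suc (Suc j)) / (\<beta>' * \<kappa>)\<rfloor> + 1
      in (a, hzero n (Suc (Suc j)) / (\<kappa> * real_of_int (a - 1))))"

definition aa :: "nat \<Rightarrow> real \<Rightarrow> nat \<Rightarrow> int" where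
  "aa n \<kappa> j = fst (abeta n \<kappa> j)"

definition beta :: "nat \<Rightarrow> real \<Rightarrow> nat \<Rightarrow> real" where
  "beta n \<kappa> j = snd (abeta n \<kappa> j)"

definition bb :: "nat \<Rightarrow> real \<Rightarrow> nat \<Rightarrow> int" where
  "bb n \<kappa> j = \<lfloor>hzero n (Suc j) / (beta n \<kappa> j * \<kappa>)\<rfloor> - 1"

text \<open>The intervals I_j for |j| \<le> k-1 (only meaningful in that range).\<close>
definition Iset :: "nat \<Rightarrow> real \<Rightarrow> int \<Rightarrow> int set" where
  "Iset n \<kappa> j =
     (if j = 0 then (if even n then {-(aa n \<kappa> 1 - 2) .. aa n \<kappa> 1 - 2} else {})
      else if 0 < j then {aa n \<kappa> (nat j) .. bb n \<kappa> (nat j)}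
      else {- bb n \<kappa> (nat (-j)) .. - aa n \<kappa> (nat (-j))})"

definition Hop :: "real \<Rightarrow> (int \<Rightarrow> complex) \<Rightarrow> int \<Rightarrow> complex" where
  "Hop \<kappa> f x = 2 * f x - f (x + 1) - f (x - 1) + of_real (\<kappa>^4 * (real_of_int x)^2) * f x"

text \<open>Spectrum of the Dirichlet restriction pi_I (Delta+v) iota_I on the finite-dimensional
  space l^2(I): its eigenvalues.\<close>
definition dir_spectrum :: "real \<Rightarrow> int set \<Rightarrow> complex set" where
  "dir_spectrum \<kappa> I = {\<mu>. \<exists>f::int \<Rightarrow> complex. (\<forall>x. x \<notin> I \<longrightarrow> f x = 0) \<and> (\<exists>x\<in>I. f x \<noteq> 0)
       \<and> (\<forall>x\<in>I. Hop \<kappa> f x = \<mu> * f x)}"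

text \<open>Bottom of the spectrum E_{n,j}(kappa) (spectrum is real, operator self-adjoint).\<close>
definition Enj :: "nat \<Rightarrow> int \<Rightarrow> real \<Rightarrow> real" where
  "Enj n j \<kappa> = Inf (Re ` dir_spectrum \<kappa> (Iset n \<kappa> j))"

end

theory Submission
  imports Defs "HOL-Real_Asymp.Real_Asymp" "HOL-Computational_Algebra.Fundamental_Theorem_Algebra"
begin

text \<open>
  On a nodal interval of h_n the Hermite function e^{-y^2/2} h_n(y) has constant sign and solves
  -psi'' + y^2 psi = (2n+1) psi.  Compressing it slightly towards the midpoint of the interval gives
  a function F that is positive on the closed interval and satisfies -F'' + y^2 F \<ge> (2n+1-\<epsilon>) F there.
  Sampling F on the grid beta_j kappa \<int> (which matches the nodal interval, since
  beta_j kappa (a_j - 1) = z_j and beta_j \<rightarrow> 1) gives, by Taylor's formula, a positive \<phi> on I_j with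
  (\<Delta> + v_kappa) \<phi> \<ge> (2n+1-2\<epsilon>) kappa^2 \<phi>.  A discrete maximum principle turns such a supersolution
  into a lower bound for every Dirichlet eigenvalue.  Negative j reduce to positive ones by x \<mapsto> -x.
\<close>

section \<open>Derivatives of the Gaussian\<close>

definition gauss_deriv :: "nat \<Rightarrow> real \<Rightarrow> real" where
  "gauss_deriv n = (deriv ^^ n) (\<lambda>t. exp (-(t^2)))"

primrec gauss_deriv_poly :: "nat \<Rightarrow> real poly" where
  "gauss_deriv_poly 0 = 1"
| "gauss_deriv_poly (Suc n) = pderiv (gauss_deriv_poly n) - [:0, 2:] * gauss_deriv_poly n"

lemma has_real_derivative_poly_mult_gauss:
  "((\<lambda>y. poly p y * exp (-(y^2))) has_real_derivative
      (poly (pderiv p) y - 2*y*poly p y) * exp (-(y^2))) (at y)"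
proof -
  have "((\<lambda>y. exp (-(y^2))) has_real_derivative exp (-(y^2)) * (-(2*y))) (at y)"
    by (auto intro!: derivative_eq_intros)
  from DERIV_mult[OF poly_DERIV this] show ?thesis by (simp add: algebra_simps)
qed

lemma gauss_deriv_eq_poly: "gauss_deriv n = (\<lambda>y. poly (gauss_deriv_poly n) y * exp (-(y^2)))"
proof (induction n)
  case 0
  show ?case by (simp add: gauss_deriv_def)
next
  case (Suc n)
  have "((\<lambda>y. poly (gauss_deriv_poly n) y * exp (-(y^2))) has_real_derivative
      poly (gauss_deriv_poly (Suc n)) y * exp (-(y^2))) (at y)" for y
    using has_real_derivative_poly_mult_gauss[of "gauss_deriv_poly n" y] by (simp add: algebra_simps)
  then have "deriv (gauss_deriv n) = (\<lambda>y. poly (gauss_deriv_poly (Suc n)) y * exp (-(y^2)))"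
    unfolding Suc by (intro ext DERIV_imp_deriv)
  then show ?case by (simp add: gauss_deriv_def)
qed

lemma gauss_deriv_DERIV: "(gauss_deriv n has_real_derivative gauss_deriv (Suc n) y) (at y)"
proof -
  have "gauss_deriv n differentiable (at y)"
    unfolding gauss_deriv_eq_poly using has_real_derivative_poly_mult_gauss real_differentiable_def by blast
  then show ?thesis by (simp add: gauss_deriv_def DERIV_deriv_iff_real_differentiable)
qed

lemma continuous_on_gauss_deriv: "continuous_on S (gauss_deriv n)"
  unfolding gauss_deriv_eq_poly by (auto intro!: continuous_intros)

lemma gauss_deriv_recurrence:
  "gauss_deriv (Suc (Suc n)) y = -2*y*gauss_deriv (Suc n) y - 2*(real n+1)*gauss_deriv n y"
proof (induction n arbitrary: y)
  case 0
  show ?case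
    by (simp add: gauss_deriv_eq_poly numeral_2_eq_2 algebra_simps power2_eq_square pderiv_pCons)
next
  case (Suc n)
  have IH: "gauss_deriv (Suc (Suc n)) = (\<lambda>y. -2*y*gauss_deriv (Suc n) y - 2*(real n+1)*gauss_deriv n y)"
    using Suc by (rule ext)
  have "((\<lambda>y. -2*y*gauss_deriv (Suc n) y - 2*(real n+1)*gauss_deriv n y) has_real_derivative
      -2*gauss_deriv (Suc n) y - 2*y*gauss_deriv (Suc (Suc n)) y - 2*(real n+1)*gauss_deriv (Suc n) y) (at y)"
    by (auto intro!: derivative_eq_intros gauss_deriv_DERIV simp: algebra_simps)
  then have "gauss_deriv (Suc (Suc (Suc n))) y =
      -2*gauss_deriv (Suc n) y - 2*y*gauss_deriv (Suc (Suc n)) y - 2*(real n+1)*gauss_deriv (Suc n) y"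
    using gauss_deriv_DERIV[of "Suc (Suc n)" y] unfolding IH by (rule DERIV_unique[rotated])
  then show ?case by (simp add: algebra_simps)
qed

lemma gauss_deriv_no_double_zero: "gauss_deriv n a = 0 \<Longrightarrow> gauss_deriv (Suc n) a \<noteq> 0"
proof (induction n)
  case 0
  then show ?case by (simp add: gauss_deriv_def)
next
  case (Suc n)
  show ?case
  proof
    assume "gauss_deriv (Suc (Suc n)) a = 0"
    then have "gauss_deriv n a = 0"
      using gauss_deriv_recurrence[of n a] Suc.prems by simp
    with Suc show False by blast
  qed
qed

lemma gauss_deriv_minus: "gauss_deriv n (-y) = (-1)^n * gauss_deriv n y"
proof -
  have "gauss_deriv n (-y) = (-1)^n * gauss_deriv n y \<and>
        gauss_deriv (Suc n) (-y) = (-1)^(Suc n) * gauss_deriv (Suc n) y"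
  proof (induction n)
    case 0
    show ?case by (simp add: gauss_deriv_eq_poly)
  next
    case (Suc n)
    then show ?case by (simp add: gauss_deriv_recurrence algebra_simps)
  qed
  then show ?thesis ..
qed

lemma gauss_deriv_poly_nonzero: "gauss_deriv_poly n \<noteq> 0"
proof
  assume "gauss_deriv_poly n = 0"
  then have zero: "gauss_deriv n = (\<lambda>_. 0)" by (simp add: gauss_deriv_eq_poly)
  then have "gauss_deriv (Suc n) 0 = 0"
    using gauss_deriv_DERIV[of n 0] by (metis DERIV_const DERIV_unique)
  with zero gauss_deriv_no_double_zero show False by metis
qed

lemma finite_Collect_gauss_deriv_eq_0: "finite {y. P y \<and> gauss_deriv n y = 0}"
proof -
  have "{y. gauss_deriv n y = 0} = {y. poly (gauss_deriv_poly n) y = 0}"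
    by (simp add: gauss_deriv_eq_poly)
  then have "finite {y. gauss_deriv n y = 0}"
    using poly_roots_finite[OF gauss_deriv_poly_nonzero] by simp
  then show ?thesis by (rule rev_finite_subset) auto
qed

lemma hermite_eq_0_iff: "hermite n y = 0 \<longleftrightarrow> gauss_deriv n y = 0"
  by (simp add: hermite_def gauss_deriv_def)

lemma tendsto_power_mult_exp_neg_square: "((\<lambda>y::real. y^i * exp (-(y^2))) \<longlongrightarrow> 0) at_top"
proof -
  have "((\<lambda>y::real. (y^i / exp y) * exp (y - y^2)) \<longlongrightarrow> 0 * 0) at_top"
    by (intro tendsto_mult tendsto_power_div_exp_0) real_asymp
  moreover have "(y^i / exp y) * exp (y - y^2) = y^i * exp (-(y^2))" for y :: real
    by (simp add: exp_diff exp_minus field_simps)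
  ultimately show ?thesis by simp
qed

lemma gauss_deriv_tendsto_0: "(gauss_deriv n \<longlongrightarrow> 0) at_top"
proof -
  have "gauss_deriv n =
      (\<lambda>y. \<Sum>i\<le>degree (gauss_deriv_poly n). coeff (gauss_deriv_poly n) i * (y^i * exp (-(y^2))))"
    by (simp add: gauss_deriv_eq_poly poly_altdef sum_distrib_right mult.assoc)
  then show ?thesis
    by (auto intro!: tendsto_null_sum tendsto_mult_right_zero tendsto_power_mult_exp_neg_square)
qed

section \<open>Zeros of the derivatives of the Gaussian\<close>

lemma Rolle_has_real_derivative:
  fixes f f' :: "real \<Rightarrow> real"
  assumes "a < b" "f a = f b" and deriv: "\<And>y. (f has_real_derivative f' y) (at y)"
  shows "\<exists>z. a < z \<and> z < b \<and> f' z = 0"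
proof -
  have "continuous_on {a..b} f"
    using deriv by (meson DERIV_isCont continuous_at_imp_continuous_on)
  moreover have "\<And>x. f differentiable (at x)"
    using deriv real_differentiable_def by blast
  ultimately obtain z where "a < z" "z < b" "(f has_real_derivative 0) (at z)"
    using Rolle[OF assms(1,2)] by blast
  then show ?thesis using deriv DERIV_unique by blast
qed

lemma deriv_zero_beyond_positive_value:
  fixes f f' :: "real \<Rightarrow> real"
  assumes deriv: "\<And>y. (f has_real_derivative f' y) (at y)"
    and lim: "(f \<longlongrightarrow> 0) at_top" and "f q = 0" "q < t" "f t > 0"
  shows "\<exists>z>q. f' z = 0"
proof -
  have cont: "continuous_on S f" for S
    using deriv by (meson DERIV_isCont continuous_at_imp_continuous_on)
  obtain T0 where T0: "\<And>y. y \<ge> T0 \<Longrightarrow> f y < f t / 2"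
    using order_tendstoD(2)[OF lim, of "f t / 2"] \<open>f t > 0\<close> by (auto simp: eventually_at_top_linorder)
  define T where "T = max T0 (t+1)"
  then have T: "t < T" "f T < f t / 2"
    using T0 by auto
  obtain s1 where s1: "q \<le> s1" "s1 \<le> t" "f s1 = f t / 2"
    using IVT'[of f q "f t / 2" t, OF _ _ _ cont] assms by auto
  obtain s2 where s2: "t \<le> s2" "f s2 = f t / 2"
    using IVT2'[of f T "f t / 2" t, OF _ _ _ cont] T assms by auto
  have "s1 < s2"
    using s1 s2 \<open>f t > 0\<close> by (cases "s1 = t") auto
  then show ?thesis
    using Rolle_has_real_derivative[OF _ _ deriv, of s1 s2] s1 s2 by force
qed

lemma deriv_zero_beyond_zero:
  fixes f f' :: "real \<Rightarrow> real"
  assumes deriv: "\<And>y. (f has_real_derivative f' y) (at y)"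
    and lim: "(f \<longlongrightarrow> 0) at_top" and zero: "f q = 0"
  shows "\<exists>z>q. f' z = 0"
proof (cases "\<exists>t>q. f t \<noteq> 0")
  case False
  then have "f (q+1) = f (q+2)" by simp
  then show ?thesis
    using Rolle_has_real_derivative[OF _ _ deriv, of "q+1" "q+2"] by force
next
  case True
  then obtain t where t: "q < t" "f t \<noteq> 0" by blast
  show ?thesis
  proof (cases "f t > 0")
    case True
    with deriv_zero_beyond_positive_value[OF deriv lim zero t(1)] show ?thesis by blast
  next
    case False
    have "\<exists>z>q. - f' z = 0"
      using t False by (intro deriv_zero_beyond_positive_value[of "\<lambda>y. - f y" _ q t])
        (auto intro: DERIV_minus deriv simp: zero tendsto_minus_cancel_left[symmetric] lim)
    then show ?thesis by simp
  qed
qed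

text \<open>
  Rolle's theorem between consecutive zeros of f, and beyond the last one (where f tends to 0),
  injects the nonnegative zeros of f into the positive zeros of f'.
\<close>
lemma card_nonneg_zeros_le_card_pos_zeros_deriv:
  fixes f f' :: "real \<Rightarrow> real"
  assumes deriv: "\<And>y. (f has_real_derivative f' y) (at y)"
    and lim: "(f \<longlongrightarrow> 0) at_top"
    and fin: "finite {y. 0 \<le> y \<and> f y = 0}" "finite {y. 0 < y \<and> f' y = 0}"
  shows "card {y. 0 \<le> y \<and> f y = 0} \<le> card {y. 0 < y \<and> f' y = 0}"
proof -
  let ?S = "{y. 0 \<le> y \<and> f y = 0}"
  have "\<exists>z>q. f' z = 0 \<and> (\<forall>r\<in>?S. q < r \<longrightarrow> z < r)" if q: "q \<in> ?S" for q
  proof (cases "{r\<in>?S. q < r} = {}")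
    case True
    then show ?thesis using deriv_zero_beyond_zero[OF deriv lim, of q] q by auto
  next
    case False
    define r0 where "r0 = Min {r\<in>?S. q < r}"
    have "finite {r\<in>?S. q < r}" using fin(1) by (rule rev_finite_subset) auto
    then have r0: "r0 \<in> ?S" "q < r0" "\<forall>r\<in>?S. q < r \<longrightarrow> r0 \<le> r"
      using Min_in[OF _ False] Min_le unfolding r0_def by auto
    then obtain z where "q < z" "z < r0" "f' z = 0"
      using Rolle_has_real_derivative[OF _ _ deriv, of q r0] q by auto
    then show ?thesis using r0 by force
  qed
  then obtain \<zeta> where \<zeta>: "\<And>q. q \<in> ?S \<Longrightarrow> q < \<zeta> q \<and> f' (\<zeta> q) = 0 \<and> (\<forall>r\<in>?S. q < r \<longrightarrow> \<zeta> q < r)"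
    by metis
  have "inj_on \<zeta> ?S"
  proof (rule linorder_inj_onI')
    fix i j assume "i \<in> ?S" "j \<in> ?S" "i < j"
    then have "\<zeta> i < j" "j < \<zeta> j" using \<zeta> by blast+
    then show "\<zeta> i \<noteq> \<zeta> j" by simp
  qed
  moreover have "\<zeta> ` ?S \<subseteq> {y. 0 < y \<and> f' y = 0}"
    using \<zeta> by force
  ultimately show ?thesis using fin(2) by (rule card_inj_on_le)
qed

definition gauss_deriv_zeros :: "nat \<Rightarrow> real set" where
  "gauss_deriv_zeros n = {y. 0 \<le> y \<and> gauss_deriv n y = 0}"

lemma finite_gauss_deriv_zeros: "finite (gauss_deriv_zeros n)"
  unfolding gauss_deriv_zeros_def by (rule finite_Collect_gauss_deriv_eq_0)

lemma card_gauss_deriv_zeros: "(n+1) div 2 \<le> card (gauss_deriv_zeros n)"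
proof (induction n)
  case 0
  show ?case by simp
next
  case (Suc n)
  have le: "card (gauss_deriv_zeros n) \<le> card {y. 0 < y \<and> gauss_deriv (Suc n) y = 0}"
    unfolding gauss_deriv_zeros_def
    by (intro card_nonneg_zeros_le_card_pos_zeros_deriv gauss_deriv_DERIV gauss_deriv_tendsto_0
        finite_Collect_gauss_deriv_eq_0)
  show ?case
  proof (cases "even n")
    case True
    then have "gauss_deriv (Suc n) 0 = 0"
      using gauss_deriv_minus[of "Suc n" 0] by simp
    then have "gauss_deriv_zeros (Suc n) = insert 0 {y. 0 < y \<and> gauss_deriv (Suc n) y = 0}"
      by (auto simp: gauss_deriv_zeros_def)
    then have "card (gauss_deriv_zeros (Suc n)) = Suc (card {y. 0 < y \<and> gauss_deriv (Suc n) y = 0})"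
      by (simp add: finite_Collect_gauss_deriv_eq_0)
    then show ?thesis using Suc.IH le True by presburger
  next
    case False
    have "{y. 0 < y \<and> gauss_deriv (Suc n) y = 0} \<subseteq> gauss_deriv_zeros (Suc n)"
      by (auto simp: gauss_deriv_zeros_def)
    then have "card {y. 0 < y \<and> gauss_deriv (Suc n) y = 0} \<le> card (gauss_deriv_zeros (Suc n))"
      by (intro card_mono finite_gauss_deriv_zeros)
    then show ?thesis using Suc.IH le False by presburger
  qed
qed

lemma hk_eq: "hk n = (n+1) div 2"
  by (simp add: hk_def)

lemma hzero_eq: "hzero n i = sorted_list_of_set (gauss_deriv_zeros n) ! (i - 1)"
  by (simp add: hzero_def gauss_deriv_zeros_def hermite_eq_0_iff)

lemma hk_le_length: "hk n \<le> length (sorted_list_of_set (gauss_deriv_zeros n))"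
  using card_gauss_deriv_zeros[of n] by (simp add: hk_eq)

lemma sorted_list_of_set_nth_gt:
  fixes S :: "'a::linorder set"
  assumes "finite S" "y \<in> S" "i < length (sorted_list_of_set S)" "y < sorted_list_of_set S ! i"
  shows "\<exists>p<i. sorted_list_of_set S ! p = y"
proof -
  obtain p where p: "p < length (sorted_list_of_set S)" "sorted_list_of_set S ! p = y"
    using assms(1,2) by (metis in_set_conv_nth set_sorted_list_of_set)
  have "\<not> i \<le> p"
    using sorted_nth_mono[OF sorted_sorted_list_of_set _ p(1), of i] p(2) assms(4) by auto
  then show ?thesis using p(2) not_le by blast
qed

lemma hzero_mem:
  assumes "1 \<le> i" "i \<le> hk n"
  shows "hzero n i \<in> gauss_deriv_zeros n"
proof -
  have "i - 1 < length (sorted_list_of_set (gauss_deriv_zeros n))"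
    using hk_le_length[of n] assms by linarith
  then show ?thesis
    using nth_mem[of "i - 1" "sorted_list_of_set (gauss_deriv_zeros n)"] finite_gauss_deriv_zeros[of n]
    by (simp add: hzero_eq)
qed

lemma hzero_less_hzero_Suc: "1 \<le> i \<Longrightarrow> i < hk n \<Longrightarrow> hzero n i < hzero n (Suc i)"
  using hk_le_length[of n] by (simp add: hzero_eq sorted_wrt_nth_less)

lemma hzero_pos:
  assumes "2 \<le> i" "i \<le> hk n"
  shows "0 < hzero n i"
proof -
  have "0 \<le> hzero n (i - 1)"
    using hzero_mem[of "i - 1" n] assms by (simp add: gauss_deriv_zeros_def)
  also have "hzero n (i - 1) < hzero n (Suc (i - 1))"
    using assms by (intro hzero_less_hzero_Suc) auto
  finally show ?thesis
    using assms by (simp add: Suc_diff_le)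
qed

lemma gauss_deriv_nonzero_between_hzero:
  assumes "1 \<le> i" "i < hk n" "hzero n i < y" "y < hzero n (Suc i)"
  shows "gauss_deriv n y \<noteq> 0"
proof
  assume "gauss_deriv n y = 0"
  moreover have "0 \<le> y"
    using hzero_mem[of i n] assms by (simp add: gauss_deriv_zeros_def)
  ultimately obtain p where "p < i" "sorted_list_of_set (gauss_deriv_zeros n) ! p = y"
    using sorted_list_of_set_nth_gt[OF finite_gauss_deriv_zeros, of y n i] hk_le_length[of n] assms
    by (auto simp: gauss_deriv_zeros_def hzero_eq)
  moreover have "p \<le> i - 1" "i - 1 < length (sorted_list_of_set (gauss_deriv_zeros n))"
    using \<open>p < i\<close> hk_le_length[of n] assms by linarith+
  ultimately show False
    using sorted_nth_mono[OF sorted_sorted_list_of_set, of p "i - 1" "gauss_deriv_zeros n"] assms(3)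
    by (auto simp: hzero_eq)
qed

lemma gauss_deriv_nonzero_below_hzero1:
  assumes "1 \<le> hk n" "0 \<le> y" "y < hzero n 1"
  shows "gauss_deriv n y \<noteq> 0"
  using sorted_list_of_set_nth_gt[OF finite_gauss_deriv_zeros, of y n 0] hk_le_length[of n] assms
  by (auto simp: gauss_deriv_zeros_def hzero_eq)

section \<open>Hermite functions and discrete supersolutions\<close>

lemma continuous_nonvanishing_constant_sign:
  fixes f :: "real \<Rightarrow> real"
  assumes cont: "continuous_on {\<alpha><..<\<gamma>} f" and nz: "\<And>y. \<alpha> < y \<Longrightarrow> y < \<gamma> \<Longrightarrow> f y \<noteq> 0"
  obtains \<sigma> where "\<And>y. \<alpha> < y \<Longrightarrow> y < \<gamma> \<Longrightarrow> \<sigma> * f y > 0"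
proof (cases "\<alpha> < \<gamma>")
  case True
  define m where "m = (\<alpha> + \<gamma>) / 2"
  have m: "\<alpha> < m" "m < \<gamma>" using True by (auto simp: m_def)
  have conn: "connected (f ` {\<alpha><..<\<gamma>})"
    by (rule connected_continuous_image[OF cont connected_Ioo])
  have "sgn (f m) * f y > 0" if y: "\<alpha> < y" "y < \<gamma>" for y
  proof (rule ccontr)
    assume "\<not> sgn (f m) * f y > 0"
    then have "min (f m) (f y) \<le> 0" "0 \<le> max (f m) (f y)"
      using nz[OF m] nz[OF y] by (auto simp: sgn_if split: if_splits)
    moreover have "min (f m) (f y) \<in> f ` {\<alpha><..<\<gamma>}" "max (f m) (f y) \<in> f ` {\<alpha><..<\<gamma>}"
      using m y by (auto simp: min_def max_def)
    ultimately have "0 \<in> f ` {\<alpha><..<\<gamma>}"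
      using connectedD_interval[OF conn] by blast
    then show False using nz by auto
  qed
  then show ?thesis by (rule that)
next
  case False
  then show ?thesis by (intro that[of 1]) auto
qed

text \<open>(-1)^n times the Hermite function e^{-y^2/2} h_n(y).\<close>
definition hermite_fun :: "nat \<Rightarrow> real \<Rightarrow> real" where
  "hermite_fun n y = exp (y^2/2) * gauss_deriv n y"

lemma hermite_fun_DERIV:
  "(hermite_fun n has_real_derivative exp (y^2/2) * (y * gauss_deriv n y + gauss_deriv (Suc n) y)) (at y)"
  unfolding hermite_fun_def[abs_def]
  by (auto intro!: derivative_eq_intros gauss_deriv_DERIV simp: algebra_simps)

lemma hermite_fun_DERIV2:
  "((\<lambda>y. exp (y^2/2) * (y * gauss_deriv n y + gauss_deriv (Suc n) y)) has_real_derivative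
      (y^2 - (2 * real n + 1)) * hermite_fun n y) (at y)"
proof -
  have "((\<lambda>y. exp (y^2/2) * (y * gauss_deriv n y + gauss_deriv (Suc n) y)) has_real_derivative
      exp (y^2/2) * y * (y * gauss_deriv n y + gauss_deriv (Suc n) y) +
      exp (y^2/2) * (gauss_deriv n y + y * gauss_deriv (Suc n) y + gauss_deriv (Suc (Suc n)) y)) (at y)"
    by (auto intro!: derivative_eq_intros gauss_deriv_DERIV simp: algebra_simps)
  then show ?thesis
    by (simp add: hermite_fun_def gauss_deriv_recurrence algebra_simps power2_eq_square)
qed

lemma Taylor_second_order:
  fixes f f' f'' :: "real \<Rightarrow> real"
  assumes "\<And>y. (f has_real_derivative f' y) (at y)" "\<And>y. (f' has_real_derivative f'' y) (at y)"
    and "h \<noteq> 0"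
  obtains \<xi> where "\<bar>\<xi> - y\<bar> \<le> \<bar>h\<bar>" "f (y+h) = f y + f' y * h + f'' \<xi> * h^2/2"
proof -
  define diff where "diff m = (if m = 0 then f else if m = 1 then f' else f'')" for m :: nat
  have "\<forall>m t. m < 2 \<and> min y (y+h) \<le> t \<and> t \<le> max y (y+h) \<longrightarrow> DERIV (diff m) t :> diff (Suc m) t"
    using assms by (auto simp: diff_def less_2_cases_iff)
  from Taylor[where n=2 and diff=diff and f=f and a="min y (y+h)" and b="max y (y+h)" and c=y
      and x="y+h", OF _ _ this] assms(3)
  obtain t where t: "if y + h < y then y + h < t \<and> t < y else y < t \<and> t < y + h"
    "f (y+h) = (\<Sum>m<2. diff m y / fact m * (y + h - y) ^ m) + diff 2 t / fact 2 * (y + h - y)^2"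
    by (auto simp: diff_def)
  show ?thesis
  proof (rule that[of t])
    show "\<bar>t - y\<bar> \<le> \<bar>h\<bar>" using t(1) by (auto split: if_splits)
    show "f (y+h) = f y + f' y * h + f'' t * h^2/2" using t(2) by (simp add: diff_def numeral_2_eq_2)
  qed
qed

lemma central_difference_le:
  fixes F F' F'' :: "real \<Rightarrow> real"
  assumes d1: "\<And>y. (F has_real_derivative F' y) (at y)"
    and d2: "\<And>y. (F' has_real_derivative F'' y) (at y)"
    and cont: "continuous_on {\<alpha>..\<gamma>} F''" and "e > 0"
  obtains \<delta> where "\<delta> > 0" "\<And>s y. 0 < s \<Longrightarrow> s \<le> \<delta> \<Longrightarrow> \<alpha> \<le> y - s \<Longrightarrow> y + s \<le> \<gamma> \<Longrightarrow>
      F (y+s) + F (y-s) - 2 * F y \<le> s^2 * (F'' y + e)"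
proof -
  obtain d where d: "d > 0"
    "\<And>x x'. x \<in> {\<alpha>..\<gamma>} \<Longrightarrow> x' \<in> {\<alpha>..\<gamma>} \<Longrightarrow> dist x' x < d \<Longrightarrow> dist (F'' x') (F'' x) < e"
    using compact_uniformly_continuous[OF cont compact_Icc] \<open>e > 0\<close>
    unfolding uniformly_continuous_on_def by metis
  have "F (y+s) + F (y-s) - 2 * F y \<le> s^2 * (F'' y + e)"
    if s: "0 < s" "s \<le> d/2" "\<alpha> \<le> y - s" "y + s \<le> \<gamma>" for s y
  proof -
    obtain \<xi>1 where \<xi>1: "\<bar>\<xi>1 - y\<bar> \<le> s" "F (y+s) = F y + F' y * s + F'' \<xi>1 * s^2/2"
      using Taylor_second_order[OF d1 d2, of s y] s by auto
    obtain \<xi>2 where \<xi>2: "\<bar>\<xi>2 - y\<bar> \<le> s" "F (y-s) = F y - F' y * s + F'' \<xi>2 * s^2/2"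
      using Taylor_second_order[OF d1 d2, of "-s" y] s by auto
    have "\<xi>1 \<in> {\<alpha>..\<gamma>}" "\<xi>2 \<in> {\<alpha>..\<gamma>}" "y \<in> {\<alpha>..\<gamma>}"
      using \<xi>1(1) \<xi>2(1) s by (auto simp: abs_le_iff)
    then have "F'' \<xi>1 + F'' \<xi>2 \<le> 2 * (F'' y + e)"
      using d(2)[of y \<xi>1] d(2)[of y \<xi>2] \<xi>1(1) \<xi>2(1) s by (force simp: dist_real_def abs_less_iff)
    then have "(F'' \<xi>1 + F'' \<xi>2) * s^2 \<le> 2 * (F'' y + e) * s^2"
      by (rule mult_right_mono) simp
    then show ?thesis using \<xi>1(2) \<xi>2(2) by (simp add: algebra_simps)
  qed
  then show ?thesis using d(1) by (intro that[of "d/2"]) auto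
qed

lemma contraction_potential_estimate:
  fixes E Y c y \<eta> :: real
  assumes "0 \<le> E" "0 \<le> \<eta>" "\<eta> \<le> 1" "\<bar>y\<bar> \<le> Y" "\<bar>c\<bar> \<le> Y"
  shows "E - \<eta> * (2*E + 6*Y^2) \<le> (1-\<eta>)^2 * (E - (c + (1-\<eta>)*(y-c))^2) + y^2"
proof -
  define \<tau> where "\<tau> = 1 - \<eta>"
  define u where "u = c + \<tau>*(y-c)"
  have \<tau>: "0 \<le> \<tau>" "\<tau> \<le> 1" using assms by (auto simp: \<tau>_def)
  have "u = (1-\<tau>)*c + \<tau>*y" by (simp add: u_def algebra_simps)
  then have "\<bar>u\<bar> \<le> (1-\<tau>)*\<bar>c\<bar> + \<tau>*\<bar>y\<bar>"
    using abs_triangle_ineq[of "(1-\<tau>)*c" "\<tau>*y"] \<tau> by (simp add: abs_mult)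
  also have "\<dots> \<le> (1-\<tau>)*Y + \<tau>*Y"
    using assms \<tau> by (intro add_mono mult_left_mono) auto
  finally have u: "\<bar>u\<bar> \<le> Y" by (simp add: algebra_simps)
  have "\<bar>(1+\<tau>)*y - \<tau>*c\<bar> \<le> (1+\<tau>)*\<bar>y\<bar> + \<tau>*\<bar>c\<bar>"
    using abs_triangle_ineq4[of "(1+\<tau>)*y" "\<tau>*c"] \<tau> by (simp add: abs_mult)
  also have "\<dots> \<le> 2*Y + 1*Y"
    using assms \<tau> by (intro add_mono mult_mono) auto
  finally have "\<bar>(1+\<tau>)*y - \<tau>*c\<bar> \<le> 3*Y" by simp
  moreover have "y - \<tau>*u = \<eta>*((1+\<tau>)*y - \<tau>*c)"
    by (simp add: u_def \<tau>_def algebra_simps power2_eq_square)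
  ultimately have minus: "\<bar>y - \<tau>*u\<bar> \<le> \<eta>*(3*Y)"
    using assms by (simp add: abs_mult mult_left_mono)
  have plus: "\<bar>y + \<tau>*u\<bar> \<le> 2*Y"
    using u assms \<tau> abs_triangle_ineq[of y "\<tau>*u"] mult_left_le_one_le[of "\<bar>u\<bar>" \<tau>]
    by (simp add: abs_mult)
  have "\<bar>y^2 - \<tau>^2*u^2\<bar> = \<bar>y - \<tau>*u\<bar> * \<bar>y + \<tau>*u\<bar>"
    by (simp add: abs_mult[symmetric] algebra_simps power2_eq_square)
  also have "\<dots> \<le> \<eta>*(3*Y) * (2*Y)"
    using minus plus assms order_trans[OF abs_ge_zero assms(4)] by (intro mult_mono) auto
  finally have "- (\<eta> * (6*Y^2)) \<le> y^2 - \<tau>^2*u^2"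
    by (simp add: power2_eq_square algebra_simps)
  moreover have "E - 2*\<eta>*E \<le> \<tau>^2 * E"
    using assms by (simp add: \<tau>_def power2_eq_square algebra_simps)
  ultimately show ?thesis
    by (simp add: u_def \<tau>_def[symmetric] algebra_simps)
qed

lemma compression_mem_interior:
  fixes \<alpha> \<gamma> c \<eta> y :: real
  assumes "\<alpha> < c" "c < \<gamma>" "0 < \<eta>" "\<eta> \<le> 1" "\<alpha> \<le> y" "y \<le> \<gamma>"
  shows "\<alpha> < c + (1 - \<eta>) * (y - c)" "c + (1 - \<eta>) * (y - c) < \<gamma>"
proof -
  have pos: "\<eta> * (c - \<alpha>) > 0" "\<eta> * (\<gamma> - c) > 0" "(1 - \<eta>) * (y - \<alpha>) \<ge> 0" "(1 - \<eta>) * (\<gamma> - y) \<ge> 0"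
    using assms by simp_all
  have eq: "c + (1 - \<eta>) * (y - c) - \<alpha> = \<eta> * (c - \<alpha>) + (1 - \<eta>) * (y - \<alpha>)"
    "\<gamma> - (c + (1 - \<eta>) * (y - c)) = \<eta> * (\<gamma> - c) + (1 - \<eta>) * (\<gamma> - y)"
    by (simp_all add: algebra_simps)
  show "\<alpha> < c + (1 - \<eta>) * (y - c)" using pos(1,3) eq(1) by linarith
  show "c + (1 - \<eta>) * (y - c) < \<gamma>" using pos(2,4) eq(2) by linarith
qed

text \<open>
  Compressing psi towards the midpoint of the interval by a factor 1 - \<eta> makes it positive on the
  closed interval, at the price of an error O(\<eta>) in the potential.
\<close>
lemma compressed_supersolution:
  fixes \<psi> \<psi>' :: "real \<Rightarrow> real" and E \<alpha> \<gamma> \<epsilon> :: real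
  assumes d1: "\<And>y. (\<psi> has_real_derivative \<psi>' y) (at y)"
    and d2: "\<And>y. (\<psi>' has_real_derivative (y^2 - E) * \<psi> y) (at y)"
    and pos: "\<And>y. \<alpha> < y \<Longrightarrow> y < \<gamma> \<Longrightarrow> \<psi> y > 0"
    and "\<alpha> < \<gamma>" "\<epsilon> > 0" "E \<ge> 0"
  obtains F F' F'' where "\<And>y. (F has_real_derivative F' y) (at y)"
    "\<And>y. (F' has_real_derivative F'' y) (at y)" "continuous_on {\<alpha>..\<gamma>} F''"
    "\<And>y. \<alpha> \<le> y \<Longrightarrow> y \<le> \<gamma> \<Longrightarrow> F y > 0"
    "\<And>y. \<alpha> \<le> y \<Longrightarrow> y \<le> \<gamma> \<Longrightarrow> F'' y \<le> (y^2 - E + \<epsilon>) * F y"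
proof -
  define Y where "Y = max \<bar>\<alpha>\<bar> \<bar>\<gamma>\<bar>"
  define c where "c = (\<alpha> + \<gamma>) / 2"
  define \<eta> where "\<eta> = min (1/2) (\<epsilon> / (2*E + 6*Y^2 + 1))"
  define \<tau> where "\<tau> = 1 - \<eta>"
  define U where "U y = c + \<tau>*(y-c)" for y
  have K: "2*E + 6*Y^2 + 1 > 0" using \<open>E \<ge> 0\<close> zero_le_power2[of Y] by linarith
  have \<eta>: "0 < \<eta>" "\<eta> \<le> 1/2" "\<eta> * (2*E + 6*Y^2) \<le> \<epsilon>"
  proof -
    show "0 < \<eta>" using K \<open>\<epsilon> > 0\<close> by (simp add: \<eta>_def)
    show "\<eta> \<le> 1/2" unfolding \<eta>_def by (rule min.cobounded1)
    have "\<eta> * (2*E + 6*Y^2) \<le> \<epsilon> / (2*E + 6*Y^2 + 1) * (2*E + 6*Y^2 + 1)"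
      using K \<open>0 < \<eta>\<close> \<open>E \<ge> 0\<close> by (intro mult_mono) (auto simp: \<eta>_def)
    also have "\<dots> = \<epsilon>" using K by simp
    finally show "\<eta> * (2*E + 6*Y^2) \<le> \<epsilon>" .
  qed
  have U_mem: "\<alpha> < U y \<and> U y < \<gamma>" if "\<alpha> \<le> y" "y \<le> \<gamma>" for y
  proof -
    have "\<alpha> < c" "c < \<gamma>" using \<open>\<alpha> < \<gamma>\<close> by (auto simp: c_def)
    then show ?thesis
      using compression_mem_interior[of \<alpha> c \<gamma> \<eta> y] \<eta> that by (simp add: U_def \<tau>_def)
  qed
  have potential: "\<tau>^2 * ((U y)^2 - E) \<le> y^2 - E + \<epsilon>" if "\<alpha> \<le> y" "y \<le> \<gamma>" for y
  proof -
    have "\<bar>y\<bar> \<le> Y" "\<bar>c\<bar> \<le> Y" using that by (auto simp: Y_def c_def)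
    then have "E - \<epsilon> \<le> \<tau>^2 * (E - (U y)^2) + y^2"
      using contraction_potential_estimate[of E \<eta> y Y c] \<eta> \<open>E \<ge> 0\<close> by (simp add: U_def \<tau>_def)
    then show ?thesis by (simp add: algebra_simps)
  qed
  define F where "F y = \<psi> (U y)" for y
  have dU: "(U has_real_derivative \<tau>) (at y)" for y
    unfolding U_def by (auto intro!: derivative_eq_intros)
  have dF: "(F has_real_derivative \<tau> * \<psi>' (U y)) (at y)" for y
    unfolding F_def using DERIV_chain2[OF d1 dU] by (simp add: mult.commute)
  have dF': "((\<lambda>y. \<tau> * \<psi>' (U y)) has_real_derivative \<tau>^2 * ((U y)^2 - E) * F y) (at y)" for y
    using DERIV_cmult[OF DERIV_chain2[OF d2 dU], of \<tau>]
    by (simp add: F_def power2_eq_square algebra_simps)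
  have F_pos: "F y > 0" if "\<alpha> \<le> y" "y \<le> \<gamma>" for y
    using pos U_mem[OF that] by (simp add: F_def)
  have "continuous_on S F" for S
    using dF by (meson DERIV_isCont continuous_at_imp_continuous_on)
  then have cont: "continuous_on {\<alpha>..\<gamma>} (\<lambda>y. \<tau>^2 * ((U y)^2 - E) * F y)"
    unfolding U_def by (intro continuous_intros)
  show thesis
  proof (rule that[OF dF dF' cont F_pos])
    fix y assume "\<alpha> \<le> y" "y \<le> \<gamma>"
    then show "\<tau>^2 * ((U y)^2 - E) * F y \<le> (y^2 - E + \<epsilon>) * F y"
      using potential F_pos by (intro mult_right_mono) (auto simp: less_imp_le)
  qed
qed

lemma discrete_supersolution_from_ode:
  fixes \<psi> \<psi>' :: "real \<Rightarrow> real" and E \<alpha> \<gamma> \<epsilon> :: real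
  assumes "\<And>y. (\<psi> has_real_derivative \<psi>' y) (at y)"
    and "\<And>y. (\<psi>' has_real_derivative (y^2 - E) * \<psi> y) (at y)"
    and "\<And>y. \<alpha> < y \<Longrightarrow> y < \<gamma> \<Longrightarrow> \<psi> y > 0"
    and "\<alpha> < \<gamma>" "\<epsilon> > 0" "E \<ge> 0"
  obtains F \<delta> where "\<delta> > 0" "\<And>y. \<alpha> \<le> y \<Longrightarrow> y \<le> \<gamma> \<Longrightarrow> F y > 0"
    "\<And>s y. 0 < s \<Longrightarrow> s \<le> \<delta> \<Longrightarrow> \<alpha> \<le> y - s \<Longrightarrow> y + s \<le> \<gamma> \<Longrightarrow>
       s^2 * (E - \<epsilon>) * F y \<le> 2 * F y - F (y+s) - F (y-s) + s^2 * y^2 * F y"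
proof -
  have "\<epsilon>/2 > 0" using \<open>\<epsilon> > 0\<close> by simp
  then obtain F F' F'' where dF: "\<And>y. (F has_real_derivative F' y) (at y)"
    and dF': "\<And>y. (F' has_real_derivative F'' y) (at y)" and cont: "continuous_on {\<alpha>..\<gamma>} F''"
    and F_pos: "\<And>y. \<alpha> \<le> y \<Longrightarrow> y \<le> \<gamma> \<Longrightarrow> F y > 0"
    and F'': "\<And>y. \<alpha> \<le> y \<Longrightarrow> y \<le> \<gamma> \<Longrightarrow> F'' y \<le> (y^2 - E + \<epsilon>/2) * F y"
    using compressed_supersolution[OF assms(1-4) _ \<open>E \<ge> 0\<close>] by blast
  have "continuous_on {\<alpha>..\<gamma>} F"
    using dF by (meson DERIV_isCont continuous_at_imp_continuous_on)
  from continuous_attains_inf[OF compact_Icc _ this] \<open>\<alpha> < \<gamma>\<close>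
  obtain y0 where y0: "y0 \<in> {\<alpha>..\<gamma>}" "\<forall>y\<in>{\<alpha>..\<gamma>}. F y0 \<le> F y" by auto
  define m where "m = F y0"
  have m: "m > 0" "\<And>y. \<alpha> \<le> y \<Longrightarrow> y \<le> \<gamma> \<Longrightarrow> m \<le> F y"
    using y0 F_pos by (auto simp: m_def)
  have "\<epsilon> * m / 2 > 0" using \<open>\<epsilon> > 0\<close> m(1) by simp
  then obtain \<delta> where \<delta>: "\<delta> > 0" "\<And>s y. 0 < s \<Longrightarrow> s \<le> \<delta> \<Longrightarrow> \<alpha> \<le> y - s \<Longrightarrow> y + s \<le> \<gamma> \<Longrightarrow>
      F (y+s) + F (y-s) - 2 * F y \<le> s^2 * (F'' y + \<epsilon> * m / 2)"
    using central_difference_le[OF dF dF' cont] by blast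
  show thesis
  proof (rule that[OF \<delta>(1) F_pos])
    fix s y assume s: "0 < s" "s \<le> \<delta>" "\<alpha> \<le> y - s" "y + s \<le> \<gamma>"
    then have y: "\<alpha> \<le> y" "y \<le> \<gamma>" by auto
    have "F'' y + \<epsilon> * m / 2 \<le> (y^2 - E + \<epsilon>/2) * F y + \<epsilon> * F y / 2"
      using F''[OF y] m(2)[OF y] \<open>\<epsilon> > 0\<close> by (intro add_mono) auto
    then have "s^2 * (F'' y + \<epsilon> * m / 2) \<le> s^2 * ((y^2 - E + \<epsilon>) * F y)"
      by (intro mult_left_mono) (simp_all add: algebra_simps)
    then have "F (y+s) + F (y-s) - 2 * F y \<le> s^2 * ((y^2 - E + \<epsilon>) * F y)"
      using \<delta>(2)[OF s] by linarith
    then show "s^2 * (E - \<epsilon>) * F y \<le> 2 * F y - F (y+s) - F (y-s) + s^2 * y^2 * F y"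
      by (simp add: algebra_simps)
  qed
qed

section \<open>Dirichlet eigenvalues on finite sets\<close>

lemma Re_Hop_mult_cnj:
  "Re (Hop \<kappa> f x * cnj (f x)) = (2 + \<kappa>^4 * (real_of_int x)^2) * (cmod (f x))^2
     - Re (f (x+1) * cnj (f x)) - Re (f (x-1) * cnj (f x))"
proof -
  have "Hop \<kappa> f x * cnj (f x) = (2 + of_real (\<kappa>^4 * (real_of_int x)^2)) * (f x * cnj (f x))
      - f (x+1) * cnj (f x) - f (x-1) * cnj (f x)"
    by (simp add: Hop_def algebra_simps)
  then show ?thesis
    by (simp add: complex_norm_square[symmetric])
qed

text \<open>
  A discrete maximum principle: at a point x0 where |f|/\<phi> is maximal, the eigenvalue equation
  for f is dominated by the supersolution inequality for \<phi>.
\<close>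
lemma dir_spectrum_Re_ge_supersolution:
  fixes \<phi> :: "int \<Rightarrow> real"
  assumes "finite I" and pos: "\<And>x. x \<in> I \<Longrightarrow> \<phi> x > 0"
    and nonneg: "\<And>x. x \<in> I \<Longrightarrow> \<phi> (x+1) \<ge> 0 \<and> \<phi> (x-1) \<ge> 0"
    and super: "\<And>x. x \<in> I \<Longrightarrow>
      E * \<phi> x \<le> 2 * \<phi> x - \<phi> (x+1) - \<phi> (x-1) + \<kappa>^4 * (real_of_int x)^2 * \<phi> x"
    and "\<mu> \<in> dir_spectrum \<kappa> I"
  shows "E \<le> Re \<mu>"
proof -
  obtain f where f0: "\<And>x. x \<notin> I \<Longrightarrow> f x = 0" and f_nz: "\<exists>x\<in>I. f x \<noteq> 0"
    and eig: "\<And>x. x \<in> I \<Longrightarrow> Hop \<kappa> f x = \<mu> * f x"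
    using assms(5) unfolding dir_spectrum_def by blast
  define r where "r x = cmod (f x) / \<phi> x" for x
  have "I \<noteq> {}" using f_nz by blast
  define x0 where "x0 = arg_min_on (\<lambda>x. - r x) I"
  have x0: "x0 \<in> I" "\<And>x. x \<in> I \<Longrightarrow> r x \<le> r x0"
    using arg_min_if_finite(1) arg_min_least[of I _ "\<lambda>x. - r x"] \<open>finite I\<close> \<open>I \<noteq> {}\<close>
    by (auto simp: x0_def)
  obtain x1 where "x1 \<in> I" "f x1 \<noteq> 0" using f_nz by blast
  then have "0 < r x1" using pos by (simp add: r_def)
  also have "r x1 \<le> r x0" using x0(2)[OF \<open>x1 \<in> I\<close>] .
  finally have r0: "r x0 > 0" .
  define a where "a = f x0"
  define V where "V = \<kappa>^4 * (real_of_int x0)^2"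
  have a: "cmod a = r x0 * \<phi> x0" "cmod a > 0"
    using pos[OF x0(1)] r0 by (auto simp: r_def a_def zero_less_divide_iff)
  have nb: "Re (f x * cnj a) \<le> r x0 * \<phi> x * cmod a" if "x = x0+1 \<or> x = x0-1" for x
  proof -
    have "cmod (f x) \<le> r x0 * \<phi> x"
    proof (cases "x \<in> I")
      case True
      then show ?thesis using x0(2)[OF True] pos[OF True] by (simp add: r_def divide_le_eq mult.commute)
    next
      case False
      then show ?thesis using f0 nonneg[OF x0(1)] r0 that by auto
    qed
    then have "cmod (f x) * cmod a \<le> r x0 * \<phi> x * cmod a"
      by (rule mult_right_mono) simp
    moreover have "Re (f x * cnj a) \<le> cmod (f x) * cmod a"
      using complex_Re_le_cmod[of "f x * cnj a"] by (simp add: norm_mult)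
    ultimately show ?thesis by linarith
  qed
  have "E * (cmod a)^2 = cmod a * r x0 * (E * \<phi> x0)"
    using a by (simp add: power2_eq_square)
  also have "\<dots> \<le> cmod a * r x0 * ((2 + V) * \<phi> x0 - \<phi> (x0+1) - \<phi> (x0-1))"
    using super[OF x0(1)] a(2) r0 by (intro mult_left_mono) (auto simp: V_def algebra_simps)
  also have "\<dots> = (2 + V) * (cmod a)^2 - r x0 * \<phi> (x0+1) * cmod a - r x0 * \<phi> (x0-1) * cmod a"
    using a by (simp add: power2_eq_square algebra_simps)
  also have "\<dots> \<le> Re (Hop \<kappa> f x0 * cnj a)"
    unfolding a_def Re_Hop_mult_cnj V_def using nb[of "x0+1"] nb[of "x0-1"] by (simp add: a_def)
  also have "\<dots> = Re \<mu> * (cmod a)^2"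
    using eig[OF x0(1)] by (simp add: a_def[symmetric] mult.assoc complex_norm_square[symmetric])
  finally show ?thesis using a(2) by simp
qed

text \<open>
  Shooting from the left end: f (a-1) = 0, f a = 1 and the eigenvalue equation at a, ..., a+k-1
  force f (a+k) = poly (shooting_poly \<kappa> a (k+1)) \<mu>; the Dirichlet condition at b+1 then reads
  poly (shooting_poly \<kappa> a (b-a+2)) \<mu> = 0.
\<close>
fun shooting_poly :: "real \<Rightarrow> int \<Rightarrow> nat \<Rightarrow> complex poly" where
  "shooting_poly \<kappa> a 0 = 0"
| "shooting_poly \<kappa> a (Suc 0) = 1"
| "shooting_poly \<kappa> a (Suc (Suc k)) =
     [: 2 + of_real (\<kappa>^4 * (real_of_int (a + int k))^2), -1 :] * shooting_poly \<kappa> a (Suc k)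
     - shooting_poly \<kappa> a k"

lemma coeff_shooting_poly:
  "(\<forall>i\<ge>k. coeff (shooting_poly \<kappa> a k) i = 0) \<and> (\<forall>i>k. coeff (shooting_poly \<kappa> a (Suc k)) i = 0)
    \<and> coeff (shooting_poly \<kappa> a (Suc k)) k = (-1)^k"
proof (induction k)
  case 0
  show ?case by (simp add: coeff_1)
next
  case (Suc k)
  have "coeff (shooting_poly \<kappa> a (Suc (Suc k))) i = 0" if "i > Suc k" for i
    using Suc that by (cases i) (auto simp: coeff_diff mult_pCons_left coeff_pCons)
  moreover have "coeff (shooting_poly \<kappa> a (Suc (Suc k))) (Suc k) = (-1)^(Suc k)"
    using Suc by (simp add: coeff_diff mult_pCons_left coeff_pCons)
  ultimately show ?case using Suc by auto
qed

lemma shooting_poly_nonconstant: "k \<ge> 1 \<Longrightarrow> \<not> constant (poly (shooting_poly \<kappa> a (Suc k)))"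
  using le_degree[of "shooting_poly \<kappa> a (Suc k)" k] coeff_shooting_poly[of k \<kappa> a]
  by (simp add: constant_degree)

lemma dir_spectrum_nonempty:
  assumes "a \<le> b"
  shows "dir_spectrum \<kappa> {a..b} \<noteq> {}"
proof -
  define N where "N = nat (b - a + 1)"
  have "N \<ge> 1" using assms by (simp add: N_def)
  then obtain \<mu> where root: "poly (shooting_poly \<kappa> a (Suc N)) \<mu> = 0"
    using fundamental_theorem_of_algebra shooting_poly_nonconstant by blast
  define f where "f x = (if a \<le> x \<and> x \<le> b then poly (shooting_poly \<kappa> a (nat (x - a + 1))) \<mu> else 0)" for x
  have "Hop \<kappa> f x = \<mu> * f x" if x: "x \<in> {a..b}" for x
  proof -
    define k where "k = nat (x - a)"
    have xk: "x = a + int k" using x by (simp add: k_def)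
    have "f x = poly (shooting_poly \<kappa> a (Suc k)) \<mu>"
      using x by (simp add: f_def k_def Suc_nat_eq_nat_zadd1 add.commute)
    moreover have "f (x-1) = poly (shooting_poly \<kappa> a k) \<mu>"
    proof (cases "k = 0")
      case False
      then have "nat (x - 1 - a + 1) = k" using xk by simp
      then show ?thesis using x False xk by (simp add: f_def)
    qed (use xk in \<open>simp add: f_def\<close>)
    moreover have "f (x+1) = poly (shooting_poly \<kappa> a (Suc (Suc k))) \<mu>"
    proof (cases "x + 1 \<le> b")
      case True
      then have "nat (x + 1 - a + 1) = Suc (Suc k)" using xk by simp
      then show ?thesis using x True by (simp add: f_def)
    next
      case False
      then have "Suc (Suc k) = Suc N" using xk x by (simp add: N_def)
      then show ?thesis using False root by (simp add: f_def)
    qed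
    ultimately show ?thesis
      using xk by (simp add: Hop_def algebra_simps)
  qed
  moreover have "f a \<noteq> 0" "\<forall>x. x \<notin> {a..b} \<longrightarrow> f x = 0"
    using assms by (simp_all add: f_def)
  ultimately have "\<mu> \<in> dir_spectrum \<kappa> {a..b}"
    unfolding dir_spectrum_def using assms by blast
  then show ?thesis by blast
qed

lemma dir_spectrum_uminus_image: "dir_spectrum \<kappa> (uminus ` I) = dir_spectrum \<kappa> I"
proof -
  have Hop_reflect: "Hop \<kappa> (\<lambda>x. f (-x)) x = Hop \<kappa> f (-x)" for f x
  proof -
    have "-(x+1) = -x - 1" "-(x-1) = -x + 1" by simp_all
    then show ?thesis unfolding Hop_def by simp
  qed
  have *: "dir_spectrum \<kappa> I \<subseteq> dir_spectrum \<kappa> (uminus ` I)" for I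
  proof
    fix \<mu> assume "\<mu> \<in> dir_spectrum \<kappa> I"
    then obtain f where "\<forall>x. x \<notin> I \<longrightarrow> f x = 0" "\<exists>x\<in>I. f x \<noteq> 0" "\<forall>x\<in>I. Hop \<kappa> f x = \<mu> * f x"
      unfolding dir_spectrum_def by blast
    then show "\<mu> \<in> dir_spectrum \<kappa> (uminus ` I)"
      unfolding dir_spectrum_def using Hop_reflect[of f]
      by (intro CollectI exI[of _ "\<lambda>x. f (-x)"]) (auto simp: image_iff, metis minus_minus)
  qed
  show ?thesis using *[of I] *[of "uminus ` I"] by (auto simp: image_image)
qed

section \<open>Eigenvalue bounds for grids inside a nodal interval\<close>

lemma Inf_Re_dir_spectrum_ge_supersolution:
  fixes \<phi> :: "int \<Rightarrow> real"
  assumes "a \<le> b" and "\<And>x. x \<in> {a..b} \<Longrightarrow> \<phi> x > 0"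
    and "\<And>x. x \<in> {a..b} \<Longrightarrow> \<phi> (x+1) \<ge> 0 \<and> \<phi> (x-1) \<ge> 0"
    and "\<And>x. x \<in> {a..b} \<Longrightarrow>
      E * \<phi> x \<le> 2 * \<phi> x - \<phi> (x+1) - \<phi> (x-1) + \<kappa>^4 * (real_of_int x)^2 * \<phi> x"
  shows "E \<le> Inf (Re ` dir_spectrum \<kappa> {a..b})"
proof (rule cInf_greatest)
  show "Re ` dir_spectrum \<kappa> {a..b} \<noteq> {}"
    using dir_spectrum_nonempty[OF assms(1)] by simp
  fix e assume "e \<in> Re ` dir_spectrum \<kappa> {a..b}"
  then show "E \<le> e"
    using dir_spectrum_Re_ge_supersolution[where I="{a..b}", OF _ assms(2-4)] by auto
qed

lemma sampled_supersolution:
  fixes F :: "real \<Rightarrow> real" and b \<kappa> L Y x :: real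
  defines "s \<equiv> b * \<kappa>"
  assumes "b > 0" "F (s * x) \<ge> 0" "(s * x)^2 \<le> Y^2"
    and diff: "s^2 * L * F (s * x) \<le>
      2 * F (s * x) - F (s * x + s) - F (s * x - s) + s^2 * (s * x)^2 * F (s * x)"
  shows "\<kappa>^2 * (b^2 * (L - Y^2 * \<bar>1 - 1/b^4\<bar>)) * F (s * x) \<le>
      2 * F (s * x) - F (s * (x+1)) - F (s * (x-1)) + \<kappa>^4 * x^2 * F (s * x)"
proof -
  define y where "y = s * x"
  have "y^2 * (1 - 1/b^4) \<le> y^2 * \<bar>1 - 1/b^4\<bar>"
    by (intro mult_left_mono) auto
  also have "\<dots> \<le> Y^2 * \<bar>1 - 1/b^4\<bar>"
    using assms(4) by (intro mult_right_mono) (auto simp: y_def)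
  finally have "y^2 * (1 - 1/b^4) \<le> Y^2 * \<bar>1 - 1/b^4\<bar>" .
  then have err: "s^2 * (y^2 * (1 - 1/b^4)) * F y \<le> s^2 * (Y^2 * \<bar>1 - 1/b^4\<bar>) * F y"
    using assms(3) by (intro mult_right_mono mult_left_mono) (auto simp: y_def)
  have "\<kappa>^4 * x^2 = s^2 * y^2 / b^4"
    using \<open>b > 0\<close> by (simp add: y_def s_def field_simps power2_eq_square eval_nat_numeral)
  then have "2 * F y - F (y+s) - F (y-s) + \<kappa>^4 * x^2 * F y =
      (2 * F y - F (y+s) - F (y-s) + s^2 * y^2 * F y) - s^2 * (y^2 * (1 - 1/b^4)) * F y"
    by (simp add: algebra_simps)
  moreover have "\<kappa>^2 * (b^2 * (L - Y^2 * \<bar>1 - 1/b^4\<bar>)) * F y =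
      s^2 * L * F y - s^2 * (Y^2 * \<bar>1 - 1/b^4\<bar>) * F y"
    by (simp add: s_def algebra_simps power2_eq_square)
  ultimately show ?thesis
    using diff err by (simp add: y_def algebra_simps)
qed

definition grid_within :: "real \<Rightarrow> int set \<Rightarrow> real \<Rightarrow> real \<Rightarrow> bool" where
  "grid_within s I \<alpha> \<gamma> \<longleftrightarrow> (\<forall>x\<in>I. \<alpha> \<le> s * real_of_int (x - 1) \<and> s * real_of_int (x + 1) \<le> \<gamma>)"

lemma grid_withinD:
  assumes "grid_within s I \<alpha> \<gamma>" "s > 0" "x \<in> I"
  shows "\<alpha> \<le> s * x - s" "s * x + s \<le> \<gamma>" "\<alpha> \<le> s * x" "s * x \<le> \<gamma>"
proof -
  show "\<alpha> \<le> s * x - s" "s * x + s \<le> \<gamma>"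
    using assms by (auto simp: grid_within_def algebra_simps)
  then show "\<alpha> \<le> s * x" "s * x \<le> \<gamma>"
    using \<open>s > 0\<close> by linarith+
qed

lemma Liminf_ge_if_eventually_ge:
  assumes "\<And>r. r < E \<Longrightarrow> eventually (\<lambda>x. r \<le> f x) F"
  shows "ereal E \<le> Liminf F (\<lambda>x. ereal (f x))"
  unfolding le_Liminf_iff
proof (intro allI impI)
  fix y assume "y < ereal E"
  then obtain r where "y < ereal r" "r < E"
    by (metis ereal_dense2 ereal_less(2) less_ereal.simps(1))
  show "\<forall>\<^sub>F x in F. y < ereal (f x)"
    using assms[OF \<open>r < E\<close>]
    by (rule eventually_mono) (metis \<open>y < ereal r\<close> ereal_less_eq(3) less_le_trans)
qed

lemma Inf_Re_dir_spectrum_ge_sampled: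
  fixes F :: "real \<Rightarrow> real" and \<beta> \<kappa> L \<alpha> \<gamma> :: real
  assumes F_pos: "\<And>y. \<alpha> \<le> y \<Longrightarrow> y \<le> \<gamma> \<Longrightarrow> F y > 0"
    and F_super: "\<And>y. \<alpha> \<le> y - \<beta> * \<kappa> \<Longrightarrow> y + \<beta> * \<kappa> \<le> \<gamma> \<Longrightarrow>
       (\<beta> * \<kappa>)^2 * L * F y \<le> 2 * F y - F (y + \<beta> * \<kappa>) - F (y - \<beta> * \<kappa>) + (\<beta> * \<kappa>)^2 * y^2 * F y"
    and "\<beta> > 0" "\<kappa> > 0" "a \<le> b" and within: "grid_within (\<beta> * \<kappa>) {a..b} \<alpha> \<gamma>"
  shows "\<kappa>^2 * (\<beta>^2 * (L - (max \<bar>\<alpha>\<bar> \<bar>\<gamma>\<bar>)^2 * \<bar>1 - 1/\<beta>^4\<bar>)) \<le> Inf (Re ` dir_spectrum \<kappa> {a..b})"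
proof -
  define s where "s = \<beta> * \<kappa>"
  have "s > 0" using assms by (simp add: s_def)
  show ?thesis
  proof (rule Inf_Re_dir_spectrum_ge_supersolution[OF \<open>a \<le> b\<close>, where \<phi> = "\<lambda>x. F (s * x)"])
    fix x assume x: "x \<in> {a..b}"
    have y: "\<alpha> \<le> s * x - s" "s * x + s \<le> \<gamma>" "\<alpha> \<le> s * x" "s * x \<le> \<gamma>"
      using grid_withinD[OF within[folded s_def] \<open>s > 0\<close> x] by auto
    then have "F (s * x) > 0" "F (s * x + s) > 0" "F (s * x - s) > 0"
      using F_pos \<open>s > 0\<close> by simp_all
    then show "F (s * x) > 0" "F (s * (x+1)) \<ge> 0 \<and> F (s * (x-1)) \<ge> 0"
      by (simp_all add: algebra_simps)
    have "(s * x)^2 \<le> (max \<bar>\<alpha>\<bar> \<bar>\<gamma>\<bar>)^2"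
      using y(3,4) by (simp add: abs_le_square_iff[symmetric])
    then show "\<kappa>^2 * (\<beta>^2 * (L - (max \<bar>\<alpha>\<bar> \<bar>\<gamma>\<bar>)^2 * \<bar>1 - 1/\<beta>^4\<bar>)) * F (s * x) \<le>
        2 * F (s * x) - F (s * (x+1)) - F (s * (x-1)) + \<kappa>^4 * (real_of_int x)^2 * F (s * x)"
      using sampled_supersolution[where F = F and b = \<beta> and \<kappa> = \<kappa> and L = L and x = x]
        F_super[OF y(1,2)[unfolded s_def]] \<open>\<beta> > 0\<close> \<open>F (s * x) > 0\<close>
      by (simp add: s_def)
  qed
qed

lemma Liminf_bottom_dir_spectrum_ge:
  fixes \<psi> \<psi>' \<beta> :: "real \<Rightarrow> real" and I :: "real \<Rightarrow> int set" and E \<alpha> \<gamma> :: real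
  assumes d1: "\<And>y. (\<psi> has_real_derivative \<psi>' y) (at y)"
    and d2: "\<And>y. (\<psi>' has_real_derivative (y^2 - E) * \<psi> y) (at y)"
    and pos: "\<And>y. \<alpha> < y \<Longrightarrow> y < \<gamma> \<Longrightarrow> \<psi> y > 0"
    and "\<alpha> < \<gamma>" "E \<ge> 0"
    and \<beta>: "(\<beta> \<longlongrightarrow> 1) (at_right 0)"
    and grid: "\<forall>\<^sub>F \<kappa> in at_right 0. \<exists>a b. I \<kappa> = {a..b} \<and> a \<le> b \<and> grid_within (\<beta> \<kappa> * \<kappa>) (I \<kappa>) \<alpha> \<gamma>"
  shows "ereal E \<le> Liminf (at_right 0) (\<lambda>\<kappa>. ereal (Inf (Re ` dir_spectrum \<kappa> (I \<kappa>)) / \<kappa>^2))"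
proof (rule Liminf_ge_if_eventually_ge)
  fix r assume "r < E"
  define \<epsilon> where "\<epsilon> = (E - r) / 2"
  have "\<epsilon> > 0" using \<open>r < E\<close> by (simp add: \<epsilon>_def)
  then obtain F \<delta> where \<delta>: "\<delta> > 0" and F_pos: "\<And>y. \<alpha> \<le> y \<Longrightarrow> y \<le> \<gamma> \<Longrightarrow> F y > 0"
    and F_super: "\<And>s y. 0 < s \<Longrightarrow> s \<le> \<delta> \<Longrightarrow> \<alpha> \<le> y - s \<Longrightarrow> y + s \<le> \<gamma> \<Longrightarrow>
       s^2 * (E - \<epsilon>) * F y \<le> 2 * F y - F (y+s) - F (y-s) + s^2 * y^2 * F y"
    using discrete_supersolution_from_ode[OF d1 d2 pos \<open>\<alpha> < \<gamma>\<close> _ \<open>E \<ge> 0\<close>] by metis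
  define w where "w b = b^2 * (E - \<epsilon> - (max \<bar>\<alpha>\<bar> \<bar>\<gamma>\<bar>)^2 * \<bar>1 - 1/b^4\<bar>)" for b :: real
  have "((\<lambda>\<kappa>. w (\<beta> \<kappa>)) \<longlongrightarrow> w 1) (at_right 0)"
    unfolding w_def by (intro tendsto_intros \<beta>) auto
  moreover have "w 1 > r"
    using \<open>r < E\<close> by (simp add: w_def \<epsilon>_def field_simps del: max_def)
  ultimately have "\<forall>\<^sub>F \<kappa> in at_right 0. r < w (\<beta> \<kappa>)" by (rule order_tendstoD)
  moreover have "\<forall>\<^sub>F \<kappa> in at_right 0. 0 < \<beta> \<kappa>"
    using order_tendstoD(1)[OF \<beta>, of 0] by simp
  moreover have "((\<lambda>\<kappa>. \<beta> \<kappa> * \<kappa>) \<longlongrightarrow> 1 * 0) (at_right 0)"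
    by (intro tendsto_intros \<beta>)
  then have "\<forall>\<^sub>F \<kappa> in at_right 0. \<beta> \<kappa> * \<kappa> < \<delta>"
    using order_tendstoD(2) \<delta> by fastforce
  moreover have "\<forall>\<^sub>F \<kappa> in at_right (0::real). 0 < \<kappa>"
    by (rule eventually_at_right_less)
  ultimately show "\<forall>\<^sub>F \<kappa> in at_right 0. r \<le> Inf (Re ` dir_spectrum \<kappa> (I \<kappa>)) / \<kappa>^2"
    using grid
  proof eventually_elim
    case (elim \<kappa>)
    then obtain a b where I: "I \<kappa> = {a..b}" "a \<le> b" and within: "grid_within (\<beta> \<kappa> * \<kappa>) {a..b} \<alpha> \<gamma>"
      by metis
    have "\<kappa>^2 * w (\<beta> \<kappa>) \<le> Inf (Re ` dir_spectrum \<kappa> {a..b})"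
      unfolding w_def
    proof (rule Inf_Re_dir_spectrum_ge_sampled[OF F_pos _ _ _ I(2) within])
      show "(\<beta> \<kappa> * \<kappa>)^2 * (E - \<epsilon>) * F y \<le>
          2 * F y - F (y + \<beta> \<kappa> * \<kappa>) - F (y - \<beta> \<kappa> * \<kappa>) + (\<beta> \<kappa> * \<kappa>)^2 * y^2 * F y"
        if "\<alpha> \<le> y - \<beta> \<kappa> * \<kappa>" "y + \<beta> \<kappa> * \<kappa> \<le> \<gamma>" for y
        using F_super[OF _ _ that] elim by simp
    qed (use elim in simp_all)
    moreover have "r * \<kappa>^2 \<le> \<kappa>^2 * w (\<beta> \<kappa>)"
      using elim by simp
    ultimately have "r * \<kappa>^2 \<le> Inf (Re ` dir_spectrum \<kappa> {a..b})" by linarith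
    then show ?case using I(1) elim by (simp add: pos_le_divide_eq)
  qed
qed

lemma Liminf_bottom_dir_spectrum_nodal_interval:
  fixes \<beta> :: "real \<Rightarrow> real" and I :: "real \<Rightarrow> int set" and \<alpha> \<gamma> :: real
  assumes "\<alpha> < \<gamma>" and nodal: "\<And>y. \<alpha> < y \<Longrightarrow> y < \<gamma> \<Longrightarrow> gauss_deriv n y \<noteq> 0"
    and "(\<beta> \<longlongrightarrow> 1) (at_right 0)"
    and "\<forall>\<^sub>F \<kappa> in at_right 0. \<exists>a b. I \<kappa> = {a..b} \<and> a \<le> b \<and> grid_within (\<beta> \<kappa> * \<kappa>) (I \<kappa>) \<alpha> \<gamma>"
  shows "ereal (2 * real n + 1) \<le>
    Liminf (at_right 0) (\<lambda>\<kappa>. ereal (Inf (Re ` dir_spectrum \<kappa> (I \<kappa>)) / \<kappa>^2))"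
proof -
  obtain \<sigma> where \<sigma>: "\<And>y. \<alpha> < y \<Longrightarrow> y < \<gamma> \<Longrightarrow> \<sigma> * gauss_deriv n y > 0"
    using continuous_nonvanishing_constant_sign[OF continuous_on_gauss_deriv nodal] by blast
  show ?thesis
  proof (rule Liminf_bottom_dir_spectrum_ge[OF _ _ _ assms(1) _ assms(3,4)])
    show "((\<lambda>y. \<sigma> * hermite_fun n y) has_real_derivative
        \<sigma> * (exp (y^2/2) * (y * gauss_deriv n y + gauss_deriv (Suc n) y))) (at y)" for y
      by (rule DERIV_cmult[OF hermite_fun_DERIV])
    show "((\<lambda>y. \<sigma> * (exp (y^2/2) * (y * gauss_deriv n y + gauss_deriv (Suc n) y))) has_real_derivative
        (y^2 - (2 * real n + 1)) * (\<sigma> * hermite_fun n y)) (at y)" for y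
      using DERIV_cmult[OF hermite_fun_DERIV2, of \<sigma> n y] by (simp add: algebra_simps)
    show "\<sigma> * hermite_fun n y > 0" if "\<alpha> < y" "y < \<gamma>" for y
    proof -
      have "\<sigma> * hermite_fun n y = exp (y^2/2) * (\<sigma> * gauss_deriv n y)"
        unfolding hermite_fun_def by (rule mult.left_commute)
      then show ?thesis using \<sigma>[OF that] by (metis exp_gt_zero mult_pos_pos)
    qed
  qed simp
qed

section \<open>The intervals I_j\<close>

lemma aa_Suc_0: "aa n \<kappa> (Suc 0) = \<lfloor>hzero n (Suc 0) / \<kappa>\<rfloor> + 1"
  by (simp add: aa_def Let_def)

lemma beta_Suc_0:
  "beta n \<kappa> (Suc 0) =
    (if hzero n (Suc 0) = 0 then 1 else hzero n (Suc 0) / (\<kappa> * real_of_int (aa n \<kappa> (Suc 0) - 1)))"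
  by (simp add: aa_def beta_def Let_def)

lemma aa_Suc_Suc:
  "aa n \<kappa> (Suc (Suc j)) = \<lfloor>hzero n (Suc (Suc j)) / (beta n \<kappa> (Suc j) * \<kappa>)\<rfloor> + 1"
  by (simp add: aa_def beta_def Let_def)

lemma beta_Suc_Suc:
  "beta n \<kappa> (Suc (Suc j)) = hzero n (Suc (Suc j)) / (\<kappa> * real_of_int (aa n \<kappa> (Suc (Suc j)) - 1))"
  by (simp add: aa_def beta_def Let_def)

lemma tendsto_div_mult_floor:
  fixes c :: real and g :: "real \<Rightarrow> real"
  assumes "c > 0" and g: "(g \<longlongrightarrow> 1) (at_right 0)"
  shows "((\<lambda>\<kappa>. c / (\<kappa> * real_of_int \<lfloor>c / (g \<kappa> * \<kappa>)\<rfloor>)) \<longlongrightarrow> 1) (at_right 0)"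
proof -
  define h where "h \<kappa> = \<kappa> * real_of_int \<lfloor>c / (g \<kappa> * \<kappa>)\<rfloor>" for \<kappa>
  have "\<forall>\<^sub>F \<kappa> in at_right 0. 0 < g \<kappa>"
    using order_tendstoD(1)[OF g, of 0] by simp
  moreover have "\<forall>\<^sub>F \<kappa> in at_right (0::real). 0 < \<kappa>"
    by (rule eventually_at_right_less)
  ultimately have bounds: "\<forall>\<^sub>F \<kappa> in at_right 0. c / g \<kappa> - \<kappa> \<le> h \<kappa> \<and> h \<kappa> \<le> c / g \<kappa>"
  proof eventually_elim
    case (elim \<kappa>)
    have "\<kappa> * (c / (g \<kappa> * \<kappa>)) = c / g \<kappa>" using elim by (simp add: field_simps)
    moreover have "\<kappa> * (c / (g \<kappa> * \<kappa>) - 1) \<le> h \<kappa>" "h \<kappa> \<le> \<kappa> * (c / (g \<kappa> * \<kappa>))"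
      unfolding h_def using elim by (intro mult_left_mono; linarith)+
    ultimately show ?case by (simp add: algebra_simps)
  qed
  have "((\<lambda>\<kappa>. c / g \<kappa> - \<kappa>) \<longlongrightarrow> c / 1 - 0) (at_right 0)" "((\<lambda>\<kappa>. c / g \<kappa>) \<longlongrightarrow> c / 1) (at_right 0)"
    by (intro tendsto_intros g; simp)+
  then have "(h \<longlongrightarrow> c) (at_right 0)"
    using bounds by (intro tendsto_sandwich[of "\<lambda>\<kappa>. c / g \<kappa> - \<kappa>" h _ "\<lambda>\<kappa>. c / g \<kappa>"])
      (auto elim: eventually_mono)
  then have "((\<lambda>\<kappa>. c / h \<kappa>) \<longlongrightarrow> c / c) (at_right 0)"
    using \<open>c > 0\<close> by (intro tendsto_intros) auto
  then show ?thesis using \<open>c > 0\<close> by (simp add: h_def)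
qed

lemma beta_tendsto_1:
  assumes "1 \<le> j" "j \<le> hk n"
  shows "((\<lambda>\<kappa>. beta n \<kappa> j) \<longlongrightarrow> 1) (at_right 0)"
  using assms
proof (induction j rule: nat_less_induct)
  case (1 j)
  consider "j = 1" | j' where "j = Suc (Suc j')"
    using \<open>1 \<le> j\<close> by (metis One_nat_def Suc_le_D le_SucE le_zero_eq not0_implies_Suc)
  then show ?case
  proof cases
    case 1
    show ?thesis
    proof (cases "hzero n 1 = 0")
      case False
      then have "hzero n 1 > 0"
        using hzero_mem[of 1 n] \<open>j \<le> hk n\<close> 1 by (auto simp: gauss_deriv_zeros_def)
      from tendsto_div_mult_floor[OF this tendsto_const[of 1]] show ?thesis
        using 1 False by (simp add: beta_Suc_0 aa_Suc_0)
    qed (use 1 in \<open>simp add: beta_Suc_0\<close>)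
  next
    case 2
    have "hzero n j > 0" using hzero_pos \<open>j \<le> hk n\<close> 2 by simp
    from tendsto_div_mult_floor[OF this "1.IH"[rule_format, of "Suc j'"]] show ?thesis
      using 2 \<open>j \<le> hk n\<close> by (simp add: beta_Suc_Suc aa_Suc_Suc)
  qed
qed

lemma beta_mult_aa:
  assumes "1 \<le> j" "\<kappa> > 0" "beta n \<kappa> j > 0"
  shows "beta n \<kappa> j * \<kappa> * real_of_int (aa n \<kappa> j - 1) = hzero n j"
proof -
  have cancel: "z / (\<kappa> * t) * \<kappa> * t = z" if "z / (\<kappa> * t) > 0" for z t :: real
    using that \<open>\<kappa> > 0\<close> by (cases "t = 0") auto
  consider "j = 1" | j' where "j = Suc (Suc j')"
    using \<open>1 \<le> j\<close> by (metis One_nat_def Suc_le_D le_SucE le_zero_eq not0_implies_Suc)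
  then show ?thesis
  proof cases
    case 1
    then show ?thesis
      using assms cancel[of "hzero n 1" "real_of_int (aa n \<kappa> 1 - 1)"]
      by (cases "hzero n 1 = 0") (simp_all add: beta_Suc_0 aa_Suc_0)
  next
    case 2
    then show ?thesis
      using assms cancel[of "hzero n j" "real_of_int (aa n \<kappa> j - 1)"] by (simp add: beta_Suc_Suc)
  qed
qed

lemma grid_within_atLeastAtMost:
  assumes "s > 0" "\<alpha> \<le> s * real_of_int (a - 1)" "s * real_of_int (b + 1) \<le> \<gamma>"
  shows "grid_within s {a..b} \<alpha> \<gamma>"
  unfolding grid_within_def
proof
  fix x assume "x \<in> {a..b}"
  then have "s * real_of_int (a - 1) \<le> s * real_of_int (x - 1)" "s * real_of_int (x + 1) \<le> s * real_of_int (b + 1)"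
    using \<open>s > 0\<close> by (simp_all add: mult_le_cancel_left_pos)
  then show "\<alpha> \<le> s * real_of_int (x - 1) \<and> s * real_of_int (x + 1) \<le> \<gamma>"
    using assms(2,3) by linarith
qed

lemma Iset_grid_within:
  assumes "1 \<le> j" "\<kappa> > 0" "beta n \<kappa> j > 0"
  shows "grid_within (beta n \<kappa> j * \<kappa>) (Iset n \<kappa> (int j)) (hzero n j) (hzero n (Suc j))"
proof -
  define s where "s = beta n \<kappa> j * \<kappa>"
  have "s > 0" using assms by (simp add: s_def)
  have "Iset n \<kappa> (int j) = {aa n \<kappa> j .. \<lfloor>hzero n (Suc j) / s\<rfloor> - 1}"
    using assms(1) by (simp add: Iset_def bb_def s_def)
  moreover have "hzero n j \<le> s * real_of_int (aa n \<kappa> j - 1)"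
    using beta_mult_aa[OF assms] by (simp add: s_def)
  moreover have "s * real_of_int (\<lfloor>hzero n (Suc j) / s\<rfloor> - 1 + 1) \<le> hzero n (Suc j)"
    using \<open>s > 0\<close> mult_left_mono[OF of_int_floor_le[of "hzero n (Suc j) / s"], of s] by simp
  ultimately show ?thesis
    using grid_within_atLeastAtMost[OF \<open>s > 0\<close>] by (simp add: s_def)
qed

lemma Iset_0_grid_within:
  assumes "even n" "\<kappa> > 0"
  shows "grid_within \<kappa> (Iset n \<kappa> 0) (- hzero n 1) (hzero n 1)"
proof -
  define A where "A = \<lfloor>hzero n 1 / \<kappa>\<rfloor>"
  have A: "\<kappa> * real_of_int A \<le> hzero n 1"
    using assms mult_left_mono[OF of_int_floor_le[of "hzero n 1 / \<kappa>"], of \<kappa>] by (simp add: A_def)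
  have "Iset n \<kappa> 0 = {-(A - 1) .. A - 1}"
    using \<open>even n\<close> by (simp add: Iset_def aa_Suc_0 A_def)
  moreover have "- hzero n 1 \<le> \<kappa> * real_of_int (- (A - 1) - 1)" "\<kappa> * real_of_int (A - 1 + 1) \<le> hzero n 1"
    using A by simp_all
  ultimately show ?thesis
    using grid_within_atLeastAtMost[OF \<open>\<kappa> > 0\<close>] by simp
qed

lemma Iset_uminus: "Iset n \<kappa> (-j) = uminus ` Iset n \<kappa> j"
  by (simp add: Iset_def)

lemma Enj_uminus: "Enj n (-j) \<kappa> = Enj n j \<kappa>"
  by (simp add: Enj_def Iset_uminus dir_spectrum_uminus_image)

lemma Liminf_Enj_ge_pos:
  assumes "1 \<le> j" "j < hk n" and ne: "\<forall>\<^sub>F \<kappa> in at_right 0. Iset n \<kappa> (int j) \<noteq> {}"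
  shows "ereal (2 * real n + 1) \<le> Liminf (at_right 0) (\<lambda>\<kappa>. ereal (Enj n (int j) \<kappa> / \<kappa>^2))"
proof -
  have \<beta>: "((\<lambda>\<kappa>. beta n \<kappa> j) \<longlongrightarrow> 1) (at_right 0)"
    using beta_tendsto_1 assms by simp
  have "\<forall>\<^sub>F \<kappa> in at_right 0. \<exists>a b. Iset n \<kappa> (int j) = {a..b} \<and> a \<le> b \<and>
      grid_within (beta n \<kappa> j * \<kappa>) (Iset n \<kappa> (int j)) (hzero n j) (hzero n (Suc j))"
    using ne eventually_at_right_less order_tendstoD(1)[OF \<beta> zero_less_one]
  proof eventually_elim
    case (elim \<kappa>)
    then show ?case using Iset_grid_within[of j \<kappa> n] assms(1) by (auto simp: Iset_def)
  qed
  moreover have "\<And>y. hzero n j < y \<Longrightarrow> y < hzero n (Suc j) \<Longrightarrow> gauss_deriv n y \<noteq> 0"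
    using gauss_deriv_nonzero_between_hzero assms(1,2) by blast
  ultimately show ?thesis
    unfolding Enj_def
    by (intro Liminf_bottom_dir_spectrum_nodal_interval[OF hzero_less_hzero_Suc[OF assms(1,2)] _ \<beta>])
qed

lemma Liminf_Enj_ge_0:
  assumes "n \<ge> 1" and ne: "\<forall>\<^sub>F \<kappa> in at_right 0. Iset n \<kappa> 0 \<noteq> {}"
  shows "ereal (2 * real n + 1) \<le> Liminf (at_right 0) (\<lambda>\<kappa>. ereal (Enj n 0 \<kappa> / \<kappa>^2))"
proof -
  define z where "z = hzero n 1"
  have hk: "1 \<le> hk n" using assms(1) by (simp add: hk_eq)
  obtain \<kappa> where \<kappa>: "Iset n \<kappa> 0 \<noteq> {}" "\<kappa> > 0"
    using eventually_happens[OF eventually_conj[OF ne eventually_at_right_less]] by auto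
  then have "even n" by (auto simp: Iset_def split: if_splits)
  have "0 < z"
  proof (rule ccontr)
    assume "\<not> 0 < z"
    then have "z = 0" using hzero_mem[OF _ hk] by (simp add: z_def gauss_deriv_zeros_def)
    then show False using \<kappa> \<open>even n\<close> by (simp add: Iset_def aa_Suc_0 z_def)
  qed
  have nodal: "gauss_deriv n y \<noteq> 0" if "-z < y" "y < z" for y
    using gauss_deriv_nonzero_below_hzero1[OF hk, of "\<bar>y\<bar>"] gauss_deriv_minus[of n y] that
    by (cases "y \<ge> 0") (auto simp: z_def \<open>even n\<close>)
  have grid: "\<forall>\<^sub>F \<kappa> in at_right 0. \<exists>a b. Iset n \<kappa> 0 = {a..b} \<and> a \<le> b \<and>
      grid_within (1 * \<kappa>) (Iset n \<kappa> 0) (-z) z"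
    using ne eventually_at_right_less
  proof eventually_elim
    case (elim \<kappa>)
    with Iset_0_grid_within[OF \<open>even n\<close> elim(2)] show ?case
      by (auto simp: Iset_def z_def \<open>even n\<close>)
  qed
  show ?thesis
    unfolding Enj_def
    by (rule Liminf_bottom_dir_spectrum_nodal_interval[where \<beta> = "\<lambda>_. 1", OF _ nodal tendsto_const grid])
      (use \<open>0 < z\<close> in simp)
qed

theorem lemma2p9:
  fixes n :: nat and j :: int
  assumes "n \<ge> 1"
    and "\<bar>j\<bar> \<le> int (hk n) - 1"
    and "\<forall>\<^sub>F \<kappa> in at_right 0. Iset n \<kappa> j \<noteq> {}"
  shows "Liminf (at_right (0::real)) (\<lambda>\<kappa>. ereal (Enj n j \<kappa> / \<kappa>^2)) \<ge> ereal (2 * real n + 1)"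
proof -
  define m where "m = nat \<bar>j\<bar>"
  have j: "j = int m \<or> j = - int m" by (auto simp: m_def)
  then have Enj: "Enj n j \<kappa> = Enj n (int m) \<kappa>" for \<kappa>
    using Enj_uminus by auto
  have ne: "\<forall>\<^sub>F \<kappa> in at_right 0. Iset n \<kappa> (int m) \<noteq> {}"
    using assms(3) j by (auto simp: Iset_uminus)
  have "ereal (2 * real n + 1) \<le> Liminf (at_right 0) (\<lambda>\<kappa>. ereal (Enj n (int m) \<kappa> / \<kappa>^2))"
  proof (cases "m = 0")
    case True
    then show ?thesis using Liminf_Enj_ge_0[OF assms(1)] ne by simp
  next
    case False
    then show ?thesis using Liminf_Enj_ge_pos[of m n] assms(2) ne by (simp add: m_def)
  qed
  then show ?thesis by (simp add: Enj)
qed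

end
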